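(* Let $T$ be an oriented tree. Suppose there exists an integer $d$ such that every finite digraph $G$ with minimum out-degree $\delta^+(G)\geq d$ contains $T$ as a subgraph. Then $T$ is grounded, i.e. its height function $h_T$ takes the same value on all vertices $v$ of $T$ with in-degree $\deg^-_T(v)\geq 2$.
   Context: Digraphs are finite, have no loops and no multiple copies of the same edge, but may contain two edges in opposite directions between a pair of vertices. An oriented tree is an orientation of an undirected tree. For an oriented tree $T$, a height function $h_T\colon V(T)\to\mathbb{Z}$ is a function with $h_T(v)=h_T(u)+1$ for every edge $(u,v)\in E(T)$; it exists and is unique up to an additive constant. $\delta^+(G)$ denotes the minimum out-degree of $G$. "Contains $T$ as a subgraph" means $G$ has a subgraph isomorphic to $T$ (as a digraph). *)

theory Defs
  imports Main
begin

definition digraph :: "'a set \<Rightarrow> ('a \<times> 'a) set \<Rightarrow> bool" where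
  "digraph V E \<longleftrightarrow> finite V \<and> E \<subseteq> V \<times> V \<and> (\<forall>v. (v, v) \<notin> E)"

definition out_deg :: "('a \<times> 'a) set \<Rightarrow> 'a \<Rightarrow> nat" where
  "out_deg E v = card {w. (v, w) \<in> E}"

definition in_deg :: "('a \<times> 'a) set \<Rightarrow> 'a \<Rightarrow> nat" where
  "in_deg E v = card {u. (u, v) \<in> E}"

text \<open>Oriented tree: a loopless digraph with no pair of opposite edges whose underlying
undirected graph is a tree (connected, nonempty, with |V| - 1 edges).\<close>
definition oriented_tree :: "'a set \<Rightarrow> ('a \<times> 'a) set \<Rightarrow> bool" where
  "oriented_tree V E \<longleftrightarrow> digraph V E \<and> V \<noteq> {} \<and>
     (\<forall>u v. (u, v) \<in> E \<longrightarrow> (v, u) \<notin> E) \<and>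
     (\<forall>u\<in>V. \<forall>v\<in>V. (u, v) \<in> (E \<union> E\<inverse>)\<^sup>*) \<and>
     card E + 1 = card V"

definition contains_subgraph ::
  "'b set \<Rightarrow> ('b \<times> 'b) set \<Rightarrow> 'a set \<Rightarrow> ('a \<times> 'a) set \<Rightarrow> bool" where
  "contains_subgraph VG EG VT ET \<longleftrightarrow>
     (\<exists>f. f ` VT \<subseteq> VG \<and> inj_on f VT \<and> (\<forall>(u, v)\<in>ET. (f u, f v) \<in> EG))"

definition height_function :: "'a set \<Rightarrow> ('a \<times> 'a) set \<Rightarrow> ('a \<Rightarrow> int) \<Rightarrow> bool" where
  "height_function V E h \<longleftrightarrow> (\<forall>(u, v)\<in>E. h v = h u + 1)"

text \<open>Grounded: the (unique up to constant) height function takes the same value on all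
vertices of in-degree at least 2. Stated for every height function.\<close>
definition grounded :: "'a set \<Rightarrow> ('a \<times> 'a) set \<Rightarrow> bool" where
  "grounded V E \<longleftrightarrow> (\<forall>h. height_function V E h \<longrightarrow>
     (\<forall>u\<in>V. \<forall>v\<in>V. in_deg E u \<ge> 2 \<longrightarrow> in_deg E v \<ge> 2 \<longrightarrow> h u = h v))"

end

theory Submission
  imports Defs "HOL-Library.Countable"
begin

text \<open>Let \<open>m\<close> exceed the height difference of two vertices of in-degree at least 2.
Take the complete \<open>D\<close>-ary forest of depth \<open>m\<close> and wire every leaf to all \<open>D\<close> roots: every
vertex gets out-degree \<open>D\<close>, only the roots have in-degree at least 2, and the depth taken
modulo \<open>m\<close> increases by one along every edge. A copy of \<open>T\<close> in this digraph therefore has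
\<open>h\<^sub>T\<close> equal to the depth plus a constant modulo \<open>m\<close>, and it places the two vertices on roots,
so their heights agree modulo \<open>m\<close>, hence agree.\<close>

lemma digraph_relabel:
  assumes "inj_on g V" "digraph V E"
  shows "digraph (g ` V) (map_prod g g ` E)"
  using assms unfolding digraph_def inj_on_def by auto

lemma out_deg_relabel:
  assumes "inj_on g V" "E \<subseteq> V \<times> V" "v \<in> V"
  shows "out_deg (map_prod g g ` E) (g v) = out_deg E v"
proof -
  have "{w. (g v, w) \<in> map_prod g g ` E} = g ` {w. (v, w) \<in> E}"
    using assms by (auto simp: inj_on_eq_iff)
  moreover have "inj_on g {w. (v, w) \<in> E}"
    using assms(2) by (blast intro: inj_on_subset[OF assms(1)])
  ultimately show ?thesis
    unfolding out_deg_def by (simp add: card_image)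
qed

lemma contains_subgraph_unrelabel:
  assumes "inj_on g V" "E \<subseteq> V \<times> V"
    and "contains_subgraph (g ` V) (map_prod g g ` E) VT ET"
  shows "contains_subgraph V E VT ET"
proof -
  obtain f where f: "f ` VT \<subseteq> g ` V" "inj_on f VT"
    "\<forall>(a, b)\<in>ET. (f a, f b) \<in> map_prod g g ` E"
    using assms(3) unfolding contains_subgraph_def by blast
  let ?f = "inv_into V g \<circ> f"
  have "?f ` VT \<subseteq> V"
    using f(1) inv_into_into[of _ g V] by auto
  moreover have "inj_on ?f VT"
    using comp_inj_on[OF f(2) inj_on_inv_into[OF f(1)]] .
  moreover have "(?f a, ?f b) \<in> E" if "(a, b) \<in> ET" for a b
  proof -
    have "(f a, f b) \<in> map_prod g g ` E"
      using bspec[OF f(3) that] by simp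
    then obtain p q where "(p, q) \<in> E" "f a = g p" "f b = g q"
      by fastforce
    moreover have "p \<in> V" "q \<in> V"
      using assms(2) calculation(1) by auto
    ultimately show ?thesis
      using assms(1) by simp
  qed
  ultimately show ?thesis
    unfolding contains_subgraph_def by blast
qed

lemma contains_subgraph_if_forced_on_nat:
  fixes V :: "'b::countable set"
  assumes forced: "\<forall>(VG :: nat set) EG. digraph VG EG \<longrightarrow> VG \<noteq> {} \<longrightarrow>
            (\<forall>v\<in>VG. int (out_deg EG v) \<ge> d) \<longrightarrow> contains_subgraph VG EG VT ET"
    and "digraph V E" "V \<noteq> {}" "\<forall>v\<in>V. int (out_deg E v) \<ge> d"
  shows "contains_subgraph V E VT ET"
proof -
  have inj: "inj_on to_nat V"
    by (simp add: inj_on_def)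
  have E: "E \<subseteq> V \<times> V"
    using assms(2) by (simp add: digraph_def)
  have "contains_subgraph (to_nat ` V) (map_prod to_nat to_nat ` E) VT ET"
    using forced digraph_relabel[OF inj assms(2)] assms(3,4)
    by (simp add: out_deg_relabel[OF inj E])
  then show ?thesis
    using contains_subgraph_unrelabel[OF inj E] by blast
qed

lemma in_deg_le_embedding:
  assumes "digraph VT ET" "digraph VG EG" "inj_on f VT" "\<forall>(a, b)\<in>ET. (f a, f b) \<in> EG"
  shows "in_deg ET x \<le> in_deg EG (f x)"
  unfolding in_deg_def
proof (rule card_inj_on_le)
  show "inj_on f {u. (u, x) \<in> ET}"
    using assms(1) unfolding digraph_def by (blast intro: inj_on_subset[OF assms(3)])
  show "f ` {u. (u, x) \<in> ET} \<subseteq> {u. (u, f x) \<in> EG}"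
    using assms(4) by blast
  show "finite {u. (u, f x) \<in> EG}"
    using assms(2) unfolding digraph_def by (auto intro: finite_subset)
qed

lemma height_minus_level_mod_const:
  fixes h lev :: "_ \<Rightarrow> int"
  assumes "height_function VT ET h" "\<forall>(a, b)\<in>ET. (f a, f b) \<in> EG"
    and "\<forall>(p, q)\<in>EG. lev q mod m = (lev p + 1) mod m"
    and "(x, y) \<in> (ET \<union> ET\<inverse>)\<^sup>*"
  shows "(h x - lev (f x)) mod m = (h y - lev (f y)) mod m"
  using assms(4)
proof (induction rule: rtrancl_induct)
  case base
  show ?case ..
next
  case (step y z)
  have "(h a - lev (f a)) mod m = (h b - lev (f b)) mod m" if "(a, b) \<in> ET" for a b
  proof -
    have "h b = h a + 1"
      using assms(1) that unfolding height_function_def by blast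
    moreover have "lev (f b) mod m = (lev (f a) + 1) mod m"
      using assms(2,3) that by blast
    ultimately show ?thesis
      by (metis add_diff_cancel_right mod_diff_eq)
  qed
  with step show ?case
    by auto
qed

text \<open>The complete \<open>D\<close>-ary forest of depth \<open>m\<close> with every leaf wired to all roots; a
vertex is the word of child indices leading to it, so the roots are the words of length 1.\<close>

definition wired_forest_vertices :: "nat \<Rightarrow> nat \<Rightarrow> nat list set" where
  "wired_forest_vertices D m = {w. set w \<subseteq> {..<D} \<and> 1 \<le> length w \<and> length w \<le> m}"

definition wired_forest_edges :: "nat \<Rightarrow> nat \<Rightarrow> (nat list \<times> nat list) set" where
  "wired_forest_edges D m =
     {(w, w @ [i]) | w i. w \<in> wired_forest_vertices D m \<and> length w < m \<and> i < D} \<union>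
     {(w, [i]) | w i. w \<in> wired_forest_vertices D m \<and> length w = m \<and> i < D}"

lemma wired_forest_digraph:
  assumes "2 \<le> m"
  shows "digraph (wired_forest_vertices D m) (wired_forest_edges D m)"
proof -
  have "wired_forest_vertices D m \<subseteq> {w. set w \<subseteq> {..<D} \<and> length w \<le> m}"
    unfolding wired_forest_vertices_def by blast
  then have "finite (wired_forest_vertices D m)"
    by (rule finite_subset) (simp add: finite_lists_length_le)
  with assms show ?thesis
    unfolding digraph_def wired_forest_edges_def wired_forest_vertices_def by auto
qed

lemma wired_forest_vertices_nonempty:
  assumes "0 < D" "1 \<le> m"
  shows "wired_forest_vertices D m \<noteq> {}"
proof -
  have "[0] \<in> wired_forest_vertices D m"
    using assms by (simp add: wired_forest_vertices_def)
  then show ?thesis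
    by blast
qed

lemma out_deg_wired_forest:
  assumes "v \<in> wired_forest_vertices D m"
  shows "out_deg (wired_forest_edges D m) v = D"
proof -
  define succ where "succ i = (if length v < m then v @ [i] else [i])" for i
  have "length v \<le> m"
    using assms by (simp add: wired_forest_vertices_def)
  then have "{w. (v, w) \<in> wired_forest_edges D m} = succ ` {..<D}"
    using assms unfolding wired_forest_edges_def succ_def by auto
  moreover have "inj succ"
    by (auto simp: inj_def succ_def)
  ultimately show ?thesis
    unfolding out_deg_def by (simp add: card_image inj_on_subset)
qed

lemma wired_forest_level_step:
  assumes "(p, q) \<in> wired_forest_edges D m"
  shows "int (length q) mod int m = (int (length p) + 1) mod int m"
  using assms unfolding wired_forest_edges_def by (auto simp: add.commute)

lemma in_deg_wired_forest_le_1: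
  assumes "length q \<noteq> 1"
  shows "in_deg (wired_forest_edges D m) q \<le> 1"
proof -
  have "{p. (p, q) \<in> wired_forest_edges D m} \<subseteq> {butlast q}"
    using assms unfolding wired_forest_edges_def by auto
  then show ?thesis
    unfolding in_deg_def using card_mono[of "{butlast q}"] by fastforce
qed

theorem theorem1p3:
  fixes VT :: "'a set" and ET :: "('a \<times> 'a) set"
  assumes "oriented_tree VT ET"
    and "\<exists>d::int. \<forall>(VG :: nat set) EG. digraph VG EG \<longrightarrow> VG \<noteq> {} \<longrightarrow>
            (\<forall>v\<in>VG. int (out_deg EG v) \<ge> d) \<longrightarrow> contains_subgraph VG EG VT ET"
  shows "grounded VT ET"
  unfolding grounded_def
proof (intro allI impI ballI)
  fix h u v
  assume height: "height_function VT ET h" and "u \<in> VT" "v \<in> VT"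
    and u2: "2 \<le> in_deg ET u" and v2: "2 \<le> in_deg ET v"
  obtain d where forced: "\<forall>(VG :: nat set) EG. digraph VG EG \<longrightarrow> VG \<noteq> {} \<longrightarrow>
      (\<forall>v\<in>VG. int (out_deg EG v) \<ge> d) \<longrightarrow> contains_subgraph VG EG VT ET"
    using assms(2) by blast
  define D where "D = Suc (nat d)"
  define m where "m = nat \<bar>h u - h v\<bar> + 2"
  let ?V = "wired_forest_vertices D m" and ?E = "wired_forest_edges D m"
  have G: "digraph ?V ?E"
    by (rule wired_forest_digraph) (simp add: m_def)
  have "contains_subgraph ?V ?E VT ET"
    using contains_subgraph_if_forced_on_nat[OF forced G] wired_forest_vertices_nonempty
    by (simp add: out_deg_wired_forest D_def m_def)
  then obtain f where "inj_on f VT" and f: "\<forall>(a, b)\<in>ET. (f a, f b) \<in> ?E"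
    unfolding contains_subgraph_def by blast
  have T: "digraph VT ET" and "(u, v) \<in> (ET \<union> ET\<inverse>)\<^sup>*"
    using assms(1) \<open>u \<in> VT\<close> \<open>v \<in> VT\<close> unfolding oriented_tree_def by blast+
  then have "(h u - int (length (f u))) mod int m = (h v - int (length (f v))) mod int m"
    using wired_forest_level_step by (intro height_minus_level_mod_const[OF height f]) blast
  moreover have "length (f x) = 1" if "2 \<le> in_deg ET x" for x
    using in_deg_le_embedding[OF T G \<open>inj_on f VT\<close> f, of x] in_deg_wired_forest_le_1[of "f x" D m]
      that by linarith
  ultimately have "int m dvd h u - h v"
    using u2 v2 by (simp add: mod_eq_dvd_iff)
  moreover have "\<bar>h u - h v\<bar> < int m"
    by (simp add: m_def)
  ultimately show "h u = h v"
    using dvd_imp_le_int[of "h u - h v" "int m"] by force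
qed

end
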